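(* For all $k,\ell\in\mathbb Z$, in $\mathbb C_w[x,x^{-1},y,y^{-1}]$, \[ y^k x^\ell=\Big(\prod_{i=1}^\ell\prod_{j=1}^k w(i,j)\Big)x^\ell y^k=\Big(\prod_{i=1}^\ell W(i,k)\Big)x^\ell y^k . \]
   Context: Let $(w(s,t))_{s,t\in\mathbb Z}$ be commuting invertible variables. $\mathbb C_w[x,x^{-1},y,y^{-1}]$ is the associative unital $\mathbb C$-algebra generated by $x,x^{-1},y,y^{-1}$ and the $w(s,t)^{\pm1}$ subject to $x^{-1}x=xx^{-1}=1$, $y^{-1}y=yy^{-1}=1$, $yx=w(1,1)xy$, $x\,w(s,t)=w(s+1,t)\,x$, $y\,w(s,t)=w(s,t+1)\,y$ for all $s,t\in\mathbb Z$. Product convention: $\prod_{j=l}^m A_j=A_l\cdots A_m$ if $m>l-1$, $=1$ if $m=l-1$, $=A_{l-1}^{-1}A_{l-2}^{-1}\cdots A_{m+1}^{-1}$ if $m<l-1$. $W(s,t)=\prod_{j=1}^t w(s,j)$. *)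

theory Defs
  imports Main
begin

(* two-sided inverse of an element of a ring (meaningful only for units) *)
definition uinv :: "'a::ring_1 \<Rightarrow> 'a" where
  "uinv a = (THE b. a * b = 1 \<and> b * a = 1)"

definition zpow :: "'a::ring_1 \<Rightarrow> int \<Rightarrow> 'a" where
  "zpow a n = (if n \<ge> 0 then a ^ nat n else uinv a ^ nat (- n))"

(* the paper's product convention:
   prod_{j=l}^m A_j = A_l ... A_m                          if m > l - 1
                    = 1                                    if m = l - 1
                    = A_{l-1}^{-1} A_{l-2}^{-1} ... A_{m+1}^{-1}  if m < l - 1 *)
definition prodZ :: "(int \<Rightarrow> 'a::ring_1) \<Rightarrow> int \<Rightarrow> int \<Rightarrow> 'a" where
  "prodZ A l m =
     (if m \<ge> l - 1 then prod_list (map A [l..m])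
      else prod_list (map (\<lambda>j. uinv (A j)) (rev [m+1..l-1])))"

definition Wf :: "(int \<Rightarrow> int \<Rightarrow> 'a::ring_1) \<Rightarrow> int \<Rightarrow> int \<Rightarrow> 'a" where
  "Wf w s t = prodZ (\<lambda>j. w s j) 1 t"

end

theory Submission
  imports Defs
begin

text \<open>Conjugation by \<open>x\<close> shifts the first index of \<open>w\<close>, conjugation by \<open>y\<close> the second.
  Hence \<open>y\<^sup>k x = W(1,k) x y\<^sup>k\<close>, and moving the factors of \<open>x\<^sup>\<ell>\<close> past \<open>y\<^sup>k\<close> one at a time
  produces the factors \<open>W(1,k), W(2,k), \<dots>\<close>, each pushed to the left through a power of \<open>x\<close>.
  Every identity concerns all integer exponents; it is proved by checking that both sides
  satisfy the same recurrence \<open>f (i + 1) = d\<^sub>i f i c\<^sub>i\<close> with invertible \<open>d\<^sub>i, c\<^sub>i\<close>, which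
  determines \<open>f\<close> from a single value in both directions.\<close>

definition invertible :: "'a::ring_1 \<Rightarrow> bool" where
  "invertible a \<longleftrightarrow> (\<exists>v. a * v = 1 \<and> v * a = 1)"

lemma
  assumes "invertible a"
  shows uinv_right_inverse: "a * uinv a = 1"
    and uinv_left_inverse: "uinv a * a = 1"
proof -
  obtain v where v: "a * v = 1" "v * a = 1"
    using assms unfolding invertible_def by blast
  have "b = v" if "a * b = 1 \<and> b * a = 1" for b
  proof -
    have "b = (v * a) * b" using v(2) by simp
    also have "\<dots> = v" using that by (simp add: mult.assoc)
    finally show ?thesis .
  qed
  then have "uinv a = v"
    unfolding uinv_def using v by (blast intro: the_equality)
  then show "a * uinv a = 1" "uinv a * a = 1" using v by simp_all
qed

lemma invertible_one: "invertible 1"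
  unfolding invertible_def by simp

lemma invertible_uinv: "invertible a \<Longrightarrow> invertible (uinv a)"
  using uinv_right_inverse uinv_left_inverse unfolding invertible_def by blast

lemma invertible_mult:
  assumes "invertible a" "invertible b"
  shows "invertible (a * b)"
proof -
  have "a * b * (uinv b * uinv a) = a * (b * uinv b) * uinv a"
    "uinv b * uinv a * (a * b) = uinv b * (uinv a * a) * b"
    by (simp_all only: mult.assoc)
  then have "a * b * (uinv b * uinv a) = 1" "uinv b * uinv a * (a * b) = 1"
    using assms by (simp_all add: uinv_right_inverse uinv_left_inverse)
  then show ?thesis unfolding invertible_def by blast
qed

lemma invertible_prod_list: "(\<And>a. a \<in> set as \<Longrightarrow> invertible a) \<Longrightarrow> invertible (prod_list as)"
  by (induction as) (simp_all add: invertible_one invertible_mult)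

lemma mult_cancel_invertible:
  assumes "invertible d" "invertible c" "d * p * c = d * q * c"
  shows "p = q"
proof -
  have "uinv d * (d * r * c) * uinv c = (uinv d * d) * r * (c * uinv c)" for r
    by (simp only: mult.assoc)
  then have cancel: "uinv d * (d * r * c) * uinv c = r" for r
    using assms(1,2) by (simp add: uinv_right_inverse uinv_left_inverse)
  show ?thesis
    using cancel[of p] cancel[of q] assms(3) by metis
qed

lemma int_recurrence_unique:
  fixes f g :: "int \<Rightarrow> 'a::ring_1"
  assumes "f k = g k"
    and "\<And>i. invertible (d i)" "\<And>i. invertible (c i)"
    and f_step: "\<And>i. f (i + 1) = d i * f i * c i"
    and g_step: "\<And>i. g (i + 1) = d i * g i * c i"
  shows "f n = g n"
proof (induction n rule: int_induct[where k = k])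
  case base
  show ?case by fact
next
  case (step1 i)
  then show ?case by (simp add: f_step g_step)
next
  case (step2 i)
  then have "d (i - 1) * f (i - 1) * c (i - 1) = d (i - 1) * g (i - 1) * c (i - 1)"
    using f_step[of "i - 1"] g_step[of "i - 1"] by simp
  then show ?case using assms(2,3) by (rule mult_cancel_invertible[rotated 2])
qed

lemma prodZ_empty: "m = l - 1 \<Longrightarrow> prodZ A l m = 1"
  unfolding prodZ_def by simp

lemma prodZ_below:
  assumes "m < l - 1"
  shows "prodZ A l m = prodZ A l (m + 1) * uinv (A (m + 1))"
proof -
  let ?P = "\<lambda>a. prod_list (map (\<lambda>j. uinv (A j)) (rev [a..l - 1]))"
  have "prodZ A l m = ?P (m + 1 + 1) * uinv (A (m + 1))"
    using assms upto_rec1[of "m + 1" "l - 1"] unfolding prodZ_def by simp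
  moreover have "prodZ A l (m + 1) = ?P (m + 1 + 1)"
    using assms unfolding prodZ_def by auto
  ultimately show ?thesis by simp
qed

lemma prodZ_add1:
  assumes "invertible (A (m + 1))"
  shows "prodZ A l (m + 1) = prodZ A l m * A (m + 1)"
proof (cases "m \<ge> l - 1")
  case True
  then have "[l..m + 1] = [l..m] @ [m + 1]"
    using upto_rec2[of l "m + 1"] by simp
  then show ?thesis using True unfolding prodZ_def by simp
next
  case False
  then show ?thesis
    using assms by (simp add: prodZ_below mult.assoc uinv_left_inverse)
qed

lemma invertible_prodZ: "(\<And>j. invertible (A j)) \<Longrightarrow> invertible (prodZ A l m)"
  unfolding prodZ_def by (auto intro!: invertible_prod_list invertible_uinv)

lemma mult_prodZ_commute:
  assumes "\<And>j. a * f j = g j * a" "\<And>j. invertible (f j)" "\<And>j. invertible (g j)"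
  shows "a * prodZ f l m = prodZ g l m * a"
proof (rule int_recurrence_unique[where k = "l - 1" and d = "\<lambda>_. 1" and c = "\<lambda>i. f (i + 1)"])
  show "a * prodZ f l (l - 1) = prodZ g l (l - 1) * a"
    by (simp add: prodZ_empty)
  show "a * prodZ f l (i + 1) = 1 * (a * prodZ f l i) * f (i + 1)" for i
    using assms(2) by (simp add: prodZ_add1 mult.assoc)
  show "prodZ g l (i + 1) * a = 1 * (prodZ g l i * a) * f (i + 1)" for i
    using assms by (simp add: prodZ_add1 mult.assoc)
qed (simp_all add: assms(2) invertible_one)

lemma zpow_0: "zpow a 0 = 1"
  unfolding zpow_def by simp

lemma zpow_add1:
  assumes "invertible a"
  shows "zpow a (n + 1) = zpow a n * a"
proof (cases "n \<ge> 0")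
  case True
  then have "nat (n + 1) = Suc (nat n)" by simp
  then show ?thesis using True unfolding zpow_def by (simp add: power_Suc2 power_commutes)
next
  case False
  then have "n = -1 \<or> nat (- n) = Suc (nat (- (n + 1)))" by auto
  then show ?thesis
    using False assms unfolding zpow_def
    by (auto simp del: power_Suc simp add: power_Suc2 mult.assoc uinv_left_inverse)
qed

lemma zpow_shift_commute:
  assumes "invertible a" "\<And>s. a * b s = b (s + 1) * a"
  shows "zpow a n * b s = b (s + n) * zpow a n"
proof -
  \<comment> \<open>With the index \<open>t = s + n\<close> fixed, both sides satisfy \<open>f (n + 1) = f n * a\<close>.\<close>
  have "zpow a n * b (t - n) = b t * zpow a n" for t
  proof (rule int_recurrence_unique[where k = 0 and d = "\<lambda>_. 1" and c = "\<lambda>_. a"])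
    show "zpow a (i + 1) * b (t - (i + 1)) = 1 * (zpow a i * b (t - i)) * a" for i
      using assms(2)[of "t - (i + 1)"] assms(1) by (simp add: zpow_add1 mult.assoc)
  qed (simp_all add: zpow_0 zpow_add1 assms(1) invertible_one mult.assoc)
  from this[of "s + n"] show ?thesis by simp
qed

locale quantum_torus =
  fixes x y :: "'a::ring_1" and w :: "int \<Rightarrow> int \<Rightarrow> 'a"
  assumes x_invertible: "invertible x"
    and y_invertible: "invertible y"
    and w_invertible: "invertible (w s t)"
    and w_commute: "w s t * w s' t' = w s' t' * w s t"
    and y_x: "y * x = w 1 1 * x * y"
    and x_w: "x * w s t = w (s + 1) t * x"
    and y_w: "y * w s t = w s (t + 1) * y"
begin

lemma Wf_invertible: "invertible (Wf w s k)"
  unfolding Wf_def by (rule invertible_prodZ) (rule w_invertible)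

lemma Wf_add1: "Wf w s (k + 1) = Wf w s k * w s (k + 1)"
  unfolding Wf_def by (simp add: prodZ_add1 w_invertible)

lemma w_Wf_commute: "w s t * Wf w s' k = Wf w s' k * w s t"
  unfolding Wf_def by (rule mult_prodZ_commute) (simp_all add: w_commute w_invertible)

lemma zpow_y_w: "zpow y k * w s t = w s (t + k) * zpow y k"
  by (rule zpow_shift_commute[where b = "w s"]) (simp_all add: y_invertible y_w)

lemma zpow_x_Wf: "zpow x l * Wf w s k = Wf w (s + l) k * zpow x l"
proof (rule zpow_shift_commute[where b = "\<lambda>s. Wf w s k"])
  show "x * Wf w s k = Wf w (s + 1) k * x" for s
    unfolding Wf_def by (rule mult_prodZ_commute) (simp_all add: x_w w_invertible)
qed (rule x_invertible)

lemma zpow_y_x: "zpow y k * x = Wf w 1 k * x * zpow y k"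
proof (rule int_recurrence_unique[where k = 0 and d = "\<lambda>i. w 1 (i + 1)" and c = "\<lambda>_. y"])
  show "zpow y (i + 1) * x = w 1 (i + 1) * (zpow y i * x) * y" for i
  proof -
    have "zpow y (i + 1) * x = (zpow y i * w 1 1) * x * y"
      by (simp add: zpow_add1 y_invertible y_x mult.assoc)
    then show ?thesis by (simp add: zpow_y_w add.commute mult.assoc)
  qed
  show "Wf w 1 (i + 1) * x * zpow y (i + 1) = w 1 (i + 1) * (Wf w 1 i * x * zpow y i) * y" for i
  proof -
    have "Wf w 1 (i + 1) = w 1 (i + 1) * Wf w 1 i"
      by (simp add: Wf_add1 w_Wf_commute)
    then show ?thesis by (simp add: zpow_add1 y_invertible mult.assoc)
  qed
qed (simp_all add: zpow_0 Wf_def prodZ_empty w_invertible y_invertible)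

lemma zpow_y_zpow_x:
  "zpow y k * zpow x l = prodZ (\<lambda>i. Wf w i k) 1 l * zpow x l * zpow y k"
proof (rule int_recurrence_unique[where k = 0 and n = l and d = "\<lambda>_. 1" and c = "\<lambda>_. x"])
  show "zpow y k * zpow x (i + 1) = 1 * (zpow y k * zpow x i) * x" for i
    by (simp add: zpow_add1 x_invertible mult.assoc)
  show "prodZ (\<lambda>i. Wf w i k) 1 (i + 1) * zpow x (i + 1) * zpow y k
      = 1 * (prodZ (\<lambda>i. Wf w i k) 1 i * zpow x i * zpow y k) * x" for i
  proof -
    let ?P = "prodZ (\<lambda>i. Wf w i k) 1"
    have "?P (i + 1) * zpow x (i + 1) * zpow y k = ?P i * (Wf w (i + 1) k * zpow x i) * x * zpow y k"
      by (simp add: prodZ_add1 Wf_invertible zpow_add1 x_invertible mult.assoc)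
    also have "\<dots> = ?P i * (zpow x i * Wf w 1 k) * x * zpow y k"
      using zpow_x_Wf[of i 1 k] by (simp add: add.commute)
    also have "\<dots> = ?P i * zpow x i * (Wf w 1 k * x * zpow y k)"
      by (simp only: mult.assoc)
    also have "\<dots> = ?P i * zpow x i * zpow y k * x"
      by (simp add: zpow_y_x mult.assoc)
    finally show ?thesis by simp
  qed
qed (simp_all add: zpow_0 prodZ_empty x_invertible invertible_one)

end

theorem lemma2:
  fixes x y :: "'a::ring_1" and w :: "int \<Rightarrow> int \<Rightarrow> 'a" and k l :: int
  assumes x_unit: "\<exists>v. x * v = 1 \<and> v * x = 1"
    and y_unit: "\<exists>v. y * v = 1 \<and> v * y = 1"
    and w_unit: "\<And>s t. \<exists>v. w s t * v = 1 \<and> v * w s t = 1"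
    and w_comm: "\<And>s t s' t'. w s t * w s' t' = w s' t' * w s t"
    and yx: "y * x = w 1 1 * x * y"
    and xw: "\<And>s t. x * w s t = w (s + 1) t * x"
    and yw: "\<And>s t. y * w s t = w s (t + 1) * y"
  shows "zpow y k * zpow x l
           = prodZ (\<lambda>i. prodZ (\<lambda>j. w i j) 1 k) 1 l * zpow x l * zpow y k
       \<and> prodZ (\<lambda>i. prodZ (\<lambda>j. w i j) 1 k) 1 l * zpow x l * zpow y k
           = prodZ (\<lambda>i. Wf w i k) 1 l * zpow x l * zpow y k"
proof -
  interpret quantum_torus x y w
    by unfold_locales (simp_all add: invertible_def assms)
  show ?thesis
    using zpow_y_zpow_x[of k l] unfolding Wf_def by simp
qed

end
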